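(* Let $N,K,L,T$ be positive integers with $N\ge K+1$, and let $\tau\in\{0,1,\dots,L-1\}$ be an integer timing offset and $\delta_f\in\mathbb{R}$ a (normalized) carrier frequency offset. Consider the noiseless received signal $$\boldsymbol{y}(t)=e^{j2\pi\delta_f t}\,\boldsymbol{h}\,s(t-\tau)+\sum_{k=1}^{K}\boldsymbol{g}_k\, i_k(t)\in\mathbb{C}^N,\qquad t\in\mathbb{Z},$$ where $\boldsymbol{h},\boldsymbol{g}_1,\dots,\boldsymbol{g}_K\in\mathbb{C}^N$ are linearly independent (deterministic, unknown) vectors, and the scalar sequences $s(t)$ and $i_1(t),\dots,i_K(t)$ are random processes that are statistically independent of one another. The values $s(1),\dots,s(T)$ (the preamble) are known to the receiver. For $\omega\in\mathbb{R}$ and $\boldsymbol{w}=[\boldsymbol{w}_0^H,\dots,\boldsymbol{w}_{L-1}^H]^H\in\mathbb{C}^{NL}$ (each $\boldsymbol{w}_l\in\mathbb{C}^N$) define $$F(\omega,\boldsymbol{w})=\sum_{t=1}^{T}\Big|s(t)-\sum_{l=0}^{L-1}e^{-j2\pi\omega(t+l)}\boldsymbol{w}_l^H\boldsymbol{y}(t+l)\Big|^2 .$$ Let $\Omega\subset\mathbb{R}$ be a search set containing $\delta_f$ such that no two distinct elements of $\Omega$ differ by an integer. If $T>(K+1)L$, then with probability one the minimum of $F$ over $\Omega\times\mathbb{C}^{NL}$ equals $0$, and every pair $(\omega^\star,\boldsymbol{w}^\star)\in\Omega\times\mathbb{C}^{NL}$ with $F(\omega^\star,\boldsymbol{w}^\star)=0$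 satisfies $\omega^\star=\delta_f$ and $\boldsymbol{w}^\star\in\mathcal{C}$, where $$\mathcal{C}=\Big\{\boldsymbol{w}=(\boldsymbol{w}_l)_{l=0}^{L-1}:\ \boldsymbol{h}^H\boldsymbol{w}_\tau=1,\ \boldsymbol{h}^H\boldsymbol{w}_l=0\ \forall l\ne\tau,\ \boldsymbol{g}_k^H\boldsymbol{w}_l=0\ \forall l\in\{0,\dots,L-1\},\ \forall k\in\{1,\dots,K\}\Big\}.$$
   Context: Setting: a single-antenna transmitter sends a digitally modulated baseband signal $s(t)$ to an $N$-antenna receiver in the presence of $K$ jamming signals $i_k(t)$; time $t$ is measured in sampling intervals. $(\cdot)^H$ denotes conjugate transpose. Equivalently, with $\vec{\boldsymbol{y}}_\omega(t)=[e^{j2\pi\omega t}\boldsymbol{y}^H(t),\dots,e^{j2\pi\omega(t+L-1)}\boldsymbol{y}^H(t+L-1)]^H\in\mathbb{C}^{NL}$, $\boldsymbol{A}_\omega\in\mathbb{C}^{T\times NL}$ the matrix whose $t$-th row is $\vec{\boldsymbol{y}}_\omega^H(t)$, and $\tilde{\boldsymbol{s}}=[s(1),\dots,s(T)]^H$, one has $F(\omega,\boldsymbol{w})=\|\tilde{\boldsymbol{s}}-\boldsymbol{A}_\omega\boldsymbol{w}\|_2^2$. The values $s(t)$ for $t\le 0$ or $t>T$ are unknown data symbols (also random, independent of the jammers). The randomness assumption is used in the sense that the signal samples are generic (e.g., the signals have jointly continuous distributions), so that "with probability one" statements about full-rank data matrices apply. A filter $\boldsymbol{w}\in\mathcal{C}$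 used with $\omega=\delta_f$ outputs exactly $s(t)$ in the noiseless case, i.e. it cancels all jammers and compensates the timing and frequency offsets. *)

theory Defs
  imports "HOL-Probability.Probability"
begin

definition hinner :: "complex ^ 'n \<Rightarrow> complex ^ 'n \<Rightarrow> complex" where
  "hinner v u = (\<Sum>i\<in>UNIV. cnj (v $ i) * u $ i)"

definition cindep_family :: "(nat \<Rightarrow> complex ^ 'n) \<Rightarrow> nat \<Rightarrow> bool" where
  "cindep_family v K \<longleftrightarrow>
     (\<forall>c :: nat \<Rightarrow> complex. (\<Sum>k\<in>{0..K}. c k *s v k) = 0 \<longrightarrow> (\<forall>k\<in>{0..K}. c k = 0))"

definition rx :: "(int \<Rightarrow> complex) \<Rightarrow> (nat \<Rightarrow> int \<Rightarrow> complex) \<Rightarrow> complex ^ 'n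
      \<Rightarrow> (nat \<Rightarrow> complex ^ 'n) \<Rightarrow> nat \<Rightarrow> nat \<Rightarrow> real \<Rightarrow> int \<Rightarrow> complex ^ 'n" where
  "rx s i h g K tau df t =
     (exp (\<i> * complex_of_real (2 * pi * df * of_int t)) * s (t - int tau)) *s h
     + (\<Sum>k\<in>{1..K}. i k t *s g k)"

(* cost F(omega, w) ; w l is the l-th block w_l, l = 0..L-1 *)
definition costF :: "(int \<Rightarrow> complex) \<Rightarrow> (int \<Rightarrow> complex ^ 'n) \<Rightarrow> nat \<Rightarrow> nat
      \<Rightarrow> real \<Rightarrow> (nat \<Rightarrow> complex ^ 'n) \<Rightarrow> real" where
  "costF s y L T om w =
     (\<Sum>t\<in>{1..int T}. (cmod (s t - (\<Sum>l<L.
         exp (- \<i> * complex_of_real (2 * pi * om * of_int (t + int l))) * hinner (w l) (y (t + int l)))))\<^sup>2)"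

definition goodC :: "complex ^ 'n \<Rightarrow> (nat \<Rightarrow> complex ^ 'n) \<Rightarrow> nat \<Rightarrow> nat \<Rightarrow> nat
      \<Rightarrow> (nat \<Rightarrow> complex ^ 'n) set" where
  "goodC h g K L tau = {w. hinner h (w tau) = 1
       \<and> (\<forall>l<L. l \<noteq> tau \<longrightarrow> hinner h (w l) = 0)
       \<and> (\<forall>l<L. \<forall>k\<in>{1..K}. hinner (g k) (w l) = 0)}"

definition proc :: "('w \<Rightarrow> int \<Rightarrow> complex) \<Rightarrow> ('w \<Rightarrow> nat \<Rightarrow> int \<Rightarrow> complex)
      \<Rightarrow> 'w \<Rightarrow> nat \<Rightarrow> int \<Rightarrow> complex" where
  "proc S I x k = (if k = 0 then S x else I x k)"

(* genericity: every finite collection of samples has a jointly continuous law,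
   i.e. one absolutely continuous w.r.t. Lebesgue measure on C^J *)
definition jointly_continuous :: "'w measure \<Rightarrow> ('w \<Rightarrow> nat \<Rightarrow> int \<Rightarrow> complex) \<Rightarrow> nat set \<Rightarrow> bool" where
  "jointly_continuous M X Ks \<longleftrightarrow>
     (\<forall>J. finite J \<longrightarrow> J \<subseteq> Ks \<times> UNIV \<longrightarrow>
        absolutely_continuous (PiM J (\<lambda>_. lborel :: complex measure))
          (distr M (PiM J (\<lambda>_. borel :: complex measure)) (\<lambda>x. \<lambda>j\<in>J. X x (fst j) (snd j))))"

end

theory Submission
  imports Defs "Jordan_Normal_Form.Determinant"
begin

(* Write e(r) = exp(2 pi j r). Multiplying the zero-cost condition at time t by e(omega t) turns it
   into the linear relation
     sum_l e(df t) s(t + l - tau) c_l + sum_{k,l} i_k(t + l) d_{l,k} - e((omega - df) t) e(df t) s(t) = 0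
   in c_l = e((df - omega) l) w_l^H h and d_{l,k} = e(-omega l) w_l^H g_k. Taking KL+L+1 preamble times
   and treating the coefficient of the last term as an unknown x gives a square system whose matrix
   A(theta) depends on theta = frac(omega - df). Its rows and columns can be ordered so that, beyond
   the top-left 2x2 block, every diagonal entry is a sample occurring nowhere else in its leading
   principal submatrix. Expanding along that entry, det A(theta) is affine in the fresh sample with
   slope a unit times the previous minor, so for fixed other samples the bad values of the fresh
   one lie on a differentiable curve in C. By induction and Fubini, the sample vectors with
   det A(theta) = 0 for some theta in (0,1) form a Lebesgue null set, an event of probability zero
   by joint continuity. Off this event, omega <> df would force x = 0 although x = -1, and for
   omega = df the solutions are exactly the filters in C; such a filter exists because h is not in
   the span of the g_k. *)

section \<open>Matrices of phased samples that are generically nonsingular\<close>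

definition sample_mat :: "nat \<Rightarrow> (nat \<Rightarrow> nat \<Rightarrow> real \<Rightarrow> complex) \<Rightarrow> (nat \<Rightarrow> nat \<Rightarrow> 'i)
    \<Rightarrow> ('i \<Rightarrow> complex) \<Rightarrow> real \<Rightarrow> complex mat" where
  "sample_mat n a u y th = Matrix.mat n n (\<lambda>(i, j). a i j th * y (u i j))"

lemma sample_mat_carrier [simp]: "sample_mat n a u y th \<in> carrier_mat n n"
  unfolding sample_mat_def by simp

lemma sample_mat_dim [simp]:
  "dim_row (sample_mat n a u y th) = n" "dim_col (sample_mat n a u y th) = n"
  unfolding sample_mat_def by simp_all

lemma sample_mat_index [simp]:
  "i < n \<Longrightarrow> j < n \<Longrightarrow> sample_mat n a u y th $$ (i, j) = a i j th * y (u i j)"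
  unfolding sample_mat_def by simp

lemma sample_mat_cong:
  assumes "\<And>i j. i < n \<Longrightarrow> j < n \<Longrightarrow> y (u i j) = y' (u i j)"
  shows "sample_mat n a u y th = sample_mat n a u y' th"
  using assms by (intro eq_matI) auto

lemma det_sample_mat:
  "Determinant.det (sample_mat n a u y th) =
     (\<Sum>p | p permutes {0..<n}. signof p * (\<Prod>i = 0..<n. a i (p i) th * y (u i (p i))))"
  unfolding Determinant.det_def
  by (auto intro!: sum.cong arg_cong2[where f = "(*)"] prod.cong
      simp: sample_mat_def permutes_in_image)

lemma differentiable_prod:
  fixes f :: "'b \<Rightarrow> real \<Rightarrow> complex"
  assumes "\<And>i. i \<in> I \<Longrightarrow> f i differentiable (at x within S)"
  shows "(\<lambda>t. \<Prod>i\<in>I. f i t) differentiable (at x within S)"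
  using assms by (induction I rule: infinite_finite_induct) (auto intro: differentiable_mult)

lemma det_sample_mat_differentiable:
  assumes "\<And>i j. a i j differentiable (at x within S)"
  shows "(\<lambda>th. Determinant.det (sample_mat n a u y th)) differentiable (at x within S)"
  unfolding det_sample_mat
  by (intro differentiable_sum ballI differentiable_mult differentiable_const differentiable_prod assms)
    (simp add: finite_permutations)

lemma det_sample_mat_measurable:
  assumes "\<And>i j. i < n \<Longrightarrow> j < n \<Longrightarrow> u i j \<in> J"
  shows "(\<lambda>y. Determinant.det (sample_mat n a u y th)) \<in> borel_measurable (PiM J (\<lambda>_. lborel))"
proof -
  have "(\<lambda>y. y (u i (p i))) \<in> borel_measurable (PiM J (\<lambda>_. lborel))"
    if "p \<in> {p. p permutes {0..<n}}" "i \<in> {0..<n}" for p i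
  proof -
    have "u i (p i) \<in> J"
      using that assms by (auto simp: permutes_in_image)
    then have "(\<lambda>y. y (u i (p i))) \<in> measurable (PiM J (\<lambda>_. lborel)) lborel"
      by (rule measurable_component_singleton)
    then show ?thesis
      by (simp add: measurable_lborel2)
  qed
  then show ?thesis
    unfolding det_sample_mat
    by (intro borel_measurable_sum borel_measurable_times borel_measurable_const borel_measurable_prod)
qed

definition singular_set :: "'i set \<Rightarrow> nat \<Rightarrow> (nat \<Rightarrow> nat \<Rightarrow> real \<Rightarrow> complex) \<Rightarrow> (nat \<Rightarrow> nat \<Rightarrow> 'i)
    \<Rightarrow> ('i \<Rightarrow> complex) set" where
  "singular_set J n a u = {y \<in> space (PiM J (\<lambda>_. lborel)).
      \<exists>th\<in>{0<..<1::real}. Determinant.det (sample_mat n a u y th) = 0}"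

lemma compact_approx_zero_imp_zero:
  fixes g :: "'a::topological_space \<Rightarrow> 'b::real_normed_vector"
  assumes "compact S" "S \<noteq> {}" "continuous_on S g"
    and approx: "\<And>k::nat. \<exists>x\<in>S. norm (g x) < 1 / real (Suc k)"
  shows "\<exists>x\<in>S. g x = 0"
proof -
  obtain x0 where x0: "x0 \<in> S" "\<And>x. x \<in> S \<Longrightarrow> norm (g x0) \<le> norm (g x)"
    using continuous_attains_inf[OF assms(1,2) continuous_on_norm[OF assms(3)]] by blast
  have "norm (g x0) \<le> 1 / real (Suc k)" for k
    using approx[of k] x0(2) by force
  then have "norm (g x0) = 0"
    by (metis nat_approx_posE norm_ge_zero not_less order.antisym)
  then show ?thesis using x0(1) by auto
qed

lemma rat_near_zero:
  fixes g :: "real \<Rightarrow> 'b::real_normed_vector"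
  assumes "isCont g x" "g x = 0" "a < x" "x < b" "0 < e"
  shows "\<exists>q::rat. real_of_rat q \<in> {a..b} \<and> norm (g (real_of_rat q)) < e"
proof -
  obtain d where d: "d > 0" "\<And>y. dist y x < d \<Longrightarrow> dist (g y) (g x) < e"
    using assms(1,5) unfolding continuous_at_eps_delta by blast
  have "max a (x - d) < min b (x + d)"
    using assms(3,4) d(1) by auto
  then obtain r where r: "r \<in> \<rat>" "max a (x - d) < r" "r < min b (x + d)"
    using Rats_dense_in_real by blast
  then obtain q where "r = real_of_rat q" by (auto elim: Rats_cases)
  moreover have "norm (g r) < e"
    using d(2)[of r] r assms(2) by (simp add: dist_norm abs_less_iff)
  ultimately show ?thesis using r by (intro exI[of _ q]) auto
qed

(* Replaces the uncountable quantifier over theta by countable ones, for measurability. *)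
lemma zero_in_unit_interval_iff_rat:
  fixes g :: "real \<Rightarrow> complex"
  assumes cont: "\<And>x. isCont g x"
  shows "(\<exists>th\<in>{0<..<1}. g th = 0) \<longleftrightarrow>
    (\<exists>m::nat. \<forall>k::nat. \<exists>q::rat. real_of_rat q \<in> {1/(real m+3)..1-1/(real m+3)}
        \<and> cmod (g (real_of_rat q)) < 1/real (Suc k))"
    (is "_ \<longleftrightarrow> (\<exists>m. \<forall>k. \<exists>q. real_of_rat q \<in> ?S m \<and> _)")
proof
  assume "\<exists>th\<in>{0<..<1}. g th = 0"
  then obtain th where th: "0 < th" "th < 1" "g th = 0" by auto
  obtain m where m: "m > 0" "inverse (real m) < min th (1 - th)"
    using ex_inverse_of_nat_less[of "min th (1 - th)"] th by auto
  have "1/(real m+3) \<le> inverse (real m)" using m(1) by (simp add: field_simps)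
  then have "1/(real m+3) < th" "th < 1-1/(real m+3)" using m(2) by auto
  then show "\<exists>m. \<forall>k. \<exists>q. real_of_rat q \<in> ?S m \<and> cmod (g (real_of_rat q)) < 1/real (Suc k)"
    using rat_near_zero[OF cont th(3)] by (intro exI[of _ m] allI) simp
next
  assume "\<exists>m. \<forall>k. \<exists>q. real_of_rat q \<in> ?S m \<and> cmod (g (real_of_rat q)) < 1/real (Suc k)"
  then obtain m where "\<And>k. \<exists>x\<in>?S m. cmod (g x) < 1/real (Suc k)" by blast
  moreover have "?S m \<noteq> {}" by (simp add: field_simps)
  moreover have "continuous_on (?S m) g"
    by (intro continuous_at_imp_continuous_on ballI cont)
  ultimately obtain th where "th \<in> ?S m" "g th = 0"
    using compact_approx_zero_imp_zero[of "?S m" g] by blast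
  moreover have "?S m \<subseteq> {0<..<1}"
  proof
    fix x assume "x \<in> ?S m"
    moreover have "0 < 1/(real m+3)" by simp
    ultimately show "x \<in> {0<..<1}" unfolding atLeastAtMost_iff greaterThanLessThan_iff by linarith
  qed
  ultimately show "\<exists>th\<in>{0<..<1}. g th = 0"
    by blast
qed

lemma singular_set_sets:
  assumes "\<And>i j. i < n \<Longrightarrow> j < n \<Longrightarrow> u i j \<in> J"
    and "\<And>i j x. a i j differentiable (at x)"
  shows "singular_set J n a u \<in> sets (PiM J (\<lambda>_. lborel))"
proof -
  have "isCont (\<lambda>th. Determinant.det (sample_mat n a u y th)) x" for y x
    by (intro differentiable_imp_continuous_within det_sample_mat_differentiable assms(2))
  then have "singular_set J n a u = {y \<in> space (PiM J (\<lambda>_. lborel)).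
      \<exists>m::nat. \<forall>k::nat. \<exists>q::rat. real_of_rat q \<in> {1/(real m+3)..1-1/(real m+3)}
        \<and> cmod (Determinant.det (sample_mat n a u y (real_of_rat q))) < 1/real (Suc k)}"
    unfolding singular_set_def by (subst zero_in_unit_interval_iff_rat[symmetric]) auto
  also have "\<dots> \<in> sets (PiM J (\<lambda>_. lborel))"
    using det_sample_mat_measurable[OF assms(1)] by measurable
  finally show ?thesis .
qed

definition fresh_diagonal :: "nat \<Rightarrow> (nat \<Rightarrow> nat \<Rightarrow> 'i) \<Rightarrow> bool" where
  "fresh_diagonal n u \<longleftrightarrow> (\<forall>i\<le>n. \<forall>j\<le>n. (i, j) \<noteq> (n, n) \<longrightarrow> u i j \<noteq> u n n)"

lemma det_sample_mat_fresh_update: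
  assumes "fresh_diagonal n u"
  shows "Determinant.det (sample_mat (Suc n) a u (y(u n n := Z)) th) =
         Determinant.det (sample_mat (Suc n) a u (y(u n n := 0)) th)
         + Z * (a n n th * Determinant.det (sample_mat n a u y th))"
proof -
  let ?A = "\<lambda>Z. sample_mat (Suc n) a u (y(u n n := Z)) th"
  let ?B = "sample_mat (Suc n) a u y th"
  have off_diag: "?A Z' $$ (i, j) = ?B $$ (i, j)"
    if "i < Suc n" "j < Suc n" "(i, j) \<noteq> (n, n)" for Z' i j
    using that assms by (simp add: fresh_diagonal_def)
  have delete_row: "mat_delete (?A Z') n j = mat_delete ?B n j" for Z' j
  proof (rule eq_matI)
    fix i' j' assume "i' < dim_row (mat_delete ?B n j)" "j' < dim_col (mat_delete ?B n j)"
    then show "mat_delete (?A Z') n j $$ (i', j') = mat_delete ?B n j $$ (i', j')"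
      unfolding mat_delete_def using off_diag[of i' "if j' < j then j' else Suc j'" Z'] by auto
  qed auto
  have minor: "mat_delete ?B n n = sample_mat n a u y th"
    by (rule eq_matI) (auto simp: mat_delete_def)
  have expand: "Determinant.det (?A Z') =
      (\<Sum>j<n. ?B $$ (n, j) * cofactor ?B n j) + Z' * (a n n th * Determinant.det (sample_mat n a u y th))"
    for Z'
  proof -
    have "Determinant.det (?A Z') = (\<Sum>j<Suc n. ?A Z' $$ (n, j) * cofactor (?A Z') n j)"
      by (rule laplace_expansion_row[OF sample_mat_carrier]) simp
    also have "\<dots> = (\<Sum>j<n. ?A Z' $$ (n, j) * cofactor (?A Z') n j) + ?A Z' $$ (n, n) * cofactor (?A Z') n n"
      by simp
    also have "(\<Sum>j<n. ?A Z' $$ (n, j) * cofactor (?A Z') n j) = (\<Sum>j<n. ?B $$ (n, j) * cofactor ?B n j)"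
    proof (rule sum.cong[OF refl])
      fix j assume "j \<in> {..<n}"
      then have "?A Z' $$ (n, j) = ?B $$ (n, j)" by (intro off_diag) auto
      then show "?A Z' $$ (n, j) * cofactor (?A Z') n j = ?B $$ (n, j) * cofactor ?B n j"
        by (simp only: cofactor_def delete_row)
    qed
    also have "?A Z' $$ (n, n) * cofactor (?A Z') n n = Z' * (a n n th * Determinant.det (sample_mat n a u y th))"
      by (simp add: cofactor_def delete_row minor flip: mult_2 power_mult)
    finally show ?thesis .
  qed
  show ?thesis using expand[of Z] expand[of 0] by simp
qed

lemma negligible_singular_fibre:
  assumes fresh: "fresh_diagonal n u"
    and diag_nz: "\<And>th. a n n th \<noteq> 0"
    and dif: "\<And>i j x. a i j differentiable (at x)"
    and nonsingular: "\<And>th. th \<in> {0<..<1} \<Longrightarrow> Determinant.det (sample_mat n a u y th) \<noteq> 0"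
  shows "negligible {Z. \<exists>th\<in>{0<..<1}. Determinant.det (sample_mat (Suc n) a u (y(u n n := Z)) th) = 0}"
proof -
  define f where "f th = - Determinant.det (sample_mat (Suc n) a u (y(u n n := 0)) th) /
                         (a n n th * Determinant.det (sample_mat n a u y th))" for th
  have "{Z. \<exists>th\<in>{0<..<1}. Determinant.det (sample_mat (Suc n) a u (y(u n n := Z)) th) = 0}
      \<subseteq> f ` {0<..<1}"
  proof safe
    fix Z th assume th: "th \<in> {0<..<1}"
      and "Determinant.det (sample_mat (Suc n) a u (y(u n n := Z)) th) = 0"
    then have "Determinant.det (sample_mat (Suc n) a u (y(u n n := 0)) th)
        + Z * (a n n th * Determinant.det (sample_mat n a u y th)) = 0"
      using det_sample_mat_fresh_update[OF fresh, of a y Z th] by simp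
    then have eq: "Z * (a n n th * Determinant.det (sample_mat n a u y th))
        = - Determinant.det (sample_mat (Suc n) a u (y(u n n := 0)) th)"
      by (simp add: eq_neg_iff_add_eq_0 add.commute)
    have "a n n th * Determinant.det (sample_mat n a u y th) \<noteq> 0"
      using diag_nz[of th] nonsingular[OF th] by simp
    then have "Z = Z * (a n n th * Determinant.det (sample_mat n a u y th))
                   / (a n n th * Determinant.det (sample_mat n a u y th))"
      by simp
    also have "\<dots> = f th"
      unfolding eq f_def ..
    finally have "Z = f th" .
    then show "Z \<in> f ` {0<..<1}" using th by blast
  qed
  moreover have "negligible (f ` {0<..<1})"
  proof (rule negligible_differentiable_image_lowdim)
    have "a i j differentiable (at x within S)" for i j x S
      using dif by (rule differentiable_at_withinI)
    then show "f differentiable_on {0<..<1}"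
      unfolding differentiable_on_def f_def
      using diag_nz nonsingular
      by (intro ballI differentiable_divide differentiable_minus differentiable_mult
          det_sample_mat_differentiable) auto
  qed simp
  ultimately show ?thesis by (rule negligible_subset[rotated])
qed

lemma null_sets_lborel_negligible:
  fixes S :: "'a::euclidean_space set"
  assumes "S \<in> sets lborel" "negligible S"
  shows "S \<in> null_sets lborel"
  using assms null_sets_completion_iff[of S lborel] negligible_iff_null_sets by blast

lemma (in product_sigma_finite) null_sets_PiM_insert_fibres:
  assumes I: "finite I" "i \<notin> I" and B: "B \<in> sets (PiM (insert i I) M)"
    and fibres: "AE x in PiM I M. {y. x(i := y) \<in> B} \<inter> space (M i) \<in> null_sets (M i)"
  shows "B \<in> null_sets (PiM (insert i I) M)"
proof -
  have "emeasure (PiM (insert i I) M) B = (\<integral>\<^sup>+ y. indicator B y \<partial>PiM (insert i I) M)"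
    using B by simp
  also have "\<dots> = (\<integral>\<^sup>+ x. (\<integral>\<^sup>+ y. indicator B (x(i := y)) \<partial>M i) \<partial>PiM I M)"
    using I B by (intro product_nn_integral_insert) auto
  also have "\<dots> = (\<integral>\<^sup>+ x. 0 \<partial>PiM I M)"
  proof (rule nn_integral_cong_AE)
    show "AE x in PiM I M. (\<integral>\<^sup>+ y. indicator B (x(i := y)) \<partial>M i) = 0"
      using fibres
    proof eventually_elim
      case (elim x)
      have "(\<integral>\<^sup>+ y. indicator B (x(i := y)) \<partial>M i)
          = (\<integral>\<^sup>+ y. indicator ({y. x(i := y) \<in> B} \<inter> space (M i)) y \<partial>M i)"
        by (intro nn_integral_cong) (simp add: indicator_def)
      also have "\<dots> = emeasure (M i) ({y. x(i := y) \<in> B} \<inter> space (M i))"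
        using elim by (intro nn_integral_indicator) auto
      finally show ?case
        using elim by auto
    qed
  qed
  finally show ?thesis
    using B by auto
qed

lemma singular_set_Suc_null:
  fixes a :: "nat \<Rightarrow> nat \<Rightarrow> real \<Rightarrow> complex" and u :: "nat \<Rightarrow> nat \<Rightarrow> 'i"
  assumes J: "finite J" "\<And>i j. i \<le> n \<Longrightarrow> j \<le> n \<Longrightarrow> u i j \<in> J"
    and fresh: "fresh_diagonal n u"
    and diag_nz: "\<And>th. a n n th \<noteq> 0"
    and dif: "\<And>i j x. a i j differentiable (at x)"
    and null: "singular_set (J - {u n n}) n a u \<in> null_sets (PiM (J - {u n n}) (\<lambda>_. lborel))"
  shows "singular_set J (Suc n) a u \<in> null_sets (PiM J (\<lambda>_. lborel))"
proof -
  let ?M = "\<lambda>_::'i. lborel :: complex measure"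
  let ?I = "J - {u n n}"
  let ?B = "singular_set J (Suc n) a u"
  interpret product_sigma_finite ?M
    by (simp add: product_sigma_finite_def sigma_finite_lborel)
  have J_eq: "J = insert (u n n) ?I"
    using J by auto
  have B_sets: "?B \<in> sets (PiM J ?M)"
    using J dif by (intro singular_set_sets) auto
  have fibre_null: "{Z. x(u n n := Z) \<in> ?B} \<in> null_sets lborel"
    if x: "x \<in> space (PiM ?I ?M)" "x \<notin> singular_set ?I n a u" for x
  proof (rule null_sets_lborel_negligible)
    have "(\<lambda>Z. x(u n n := Z)) \<in> measurable lborel (PiM J ?M)"
      using measurable_component_update[OF x(1), of "u n n"] J_eq by simp
    from measurable_sets[OF this B_sets]
    show "{Z. x(u n n := Z) \<in> ?B} \<in> sets lborel"
      by (simp add: vimage_def)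
    have "negligible {Z. \<exists>th\<in>{0<..<1}. Determinant.det (sample_mat (Suc n) a u (x(u n n := Z)) th) = 0}"
      using x fresh diag_nz dif
      by (intro negligible_singular_fibre) (auto simp: singular_set_def)
    then show "negligible {Z. x(u n n := Z) \<in> ?B}"
      by (rule negligible_subset) (auto simp: singular_set_def)
  qed
  have "AE x in PiM ?I ?M. x \<notin> singular_set ?I n a u"
    using null by (rule AE_not_in)
  then have "AE x in PiM ?I ?M. {Z. x(u n n := Z) \<in> ?B} \<in> null_sets lborel"
    using AE_space by eventually_elim (simp add: fibre_null)
  then show ?thesis
    using J B_sets J_eq by (subst J_eq) (intro null_sets_PiM_insert_fibres; simp)
qed

definition generically_nonsingular :: "nat \<Rightarrow> (nat \<Rightarrow> nat \<Rightarrow> real \<Rightarrow> complex) \<Rightarrow> (nat \<Rightarrow> nat \<Rightarrow> 'i) \<Rightarrow> bool" where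
  "generically_nonsingular n a u \<longleftrightarrow> (\<forall>J. finite J \<longrightarrow> (\<forall>i<n. \<forall>j<n. u i j \<in> J) \<longrightarrow>
      singular_set J n a u \<in> null_sets (PiM J (\<lambda>_. lborel)))"

lemma generically_nonsingular_Suc:
  assumes "generically_nonsingular n a u" "fresh_diagonal n u"
    and "\<And>th. a n n th \<noteq> 0" "\<And>i j x. a i j differentiable (at x)"
  shows "generically_nonsingular (Suc n) a u"
  unfolding generically_nonsingular_def
proof (intro allI impI)
  fix J assume J: "finite J" "\<forall>i<Suc n. \<forall>j<Suc n. u i j \<in> J"
  have "\<forall>i<n. \<forall>j<n. u i j \<in> J - {u n n}"
    using J(2) assms(2) by (auto simp: fresh_diagonal_def)
  then have "singular_set (J - {u n n}) n a u \<in> null_sets (PiM (J - {u n n}) (\<lambda>_. lborel))"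
    using assms(1) J(1) by (simp add: generically_nonsingular_def)
  then show "singular_set J (Suc n) a u \<in> null_sets (PiM J (\<lambda>_. lborel))"
    using J assms(2-4) by (intro singular_set_Suc_null) auto
qed

lemma generically_nonsingular_extend:
  assumes "generically_nonsingular m a u" "m \<le> n"
    and "\<And>k. m \<le> k \<Longrightarrow> k < n \<Longrightarrow> fresh_diagonal k u"
    and "\<And>k th. a k k th \<noteq> 0" "\<And>i j x. a i j differentiable (at x)"
  shows "generically_nonsingular n a u"
  using assms(2,1)
proof (induction n rule: dec_induct)
  case (step k)
  then show ?case using assms(3-5) by (intro generically_nonsingular_Suc) auto
qed

lemma coordinate_zero_null:
  assumes "finite J" "j \<in> J"
  shows "{y \<in> space (PiM J (\<lambda>_. lborel :: complex measure)). y j = 0} \<in> null_sets (PiM J (\<lambda>_. lborel))"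
proof -
  interpret product_sigma_finite "\<lambda>_::'i. lborel :: complex measure"
    by (simp add: product_sigma_finite_def sigma_finite_lborel)
  let ?E = "PiE J (\<lambda>i. if i = j then {0 :: complex} else UNIV)"
  have "{y \<in> space (PiM J (\<lambda>_. lborel :: complex measure)). y j = 0} = ?E"
    using assms(2) by (auto simp: space_PiM PiE_iff extensional_def split: if_splits)
  moreover have "emeasure (PiM J (\<lambda>_. lborel)) ?E = 0"
    using assms by (subst emeasure_PiM) (auto intro: prod_zero)
  moreover have "?E \<in> sets (PiM J (\<lambda>_. lborel))"
    by (rule sets_PiM_I_finite) (auto simp: assms)
  ultimately show ?thesis by (auto intro: null_setsI)
qed

lemma det_sample_mat_2:
  "Determinant.det (sample_mat 2 a u y th) =
     a 0 0 th * y (u 0 0) * (a 1 1 th * y (u 1 1)) - a 0 1 th * y (u 0 1) * (a 1 0 th * y (u 1 0))"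
proof -
  let ?A = "sample_mat 2 a u y th"
  have minor: "mat_delete ?A 1 j \<in> carrier_mat 1 1" for j
    using mat_delete_carrier[OF sample_mat_carrier[of 2 a u y th]] by simp
  have "Determinant.det ?A = (\<Sum>j<2. ?A $$ (1, j) * cofactor ?A 1 j)"
    by (rule laplace_expansion_row[OF sample_mat_carrier]) simp
  also have "\<dots> = - ?A $$ (1, 0) * ?A $$ (0, 1) + ?A $$ (1, 1) * ?A $$ (0, 0)"
    using det_single[OF minor[of 0]] det_single[OF minor[of 1]]
    by (simp add: numeral_2_eq_2 cofactor_def mat_delete_def)
  finally show ?thesis by (simp add: algebra_simps)
qed

lemma generically_nonsingular_2:
  assumes u: "u 0 1 = u 0 0" "u 1 0 = u 1 1"
    and nz: "\<And>th. th \<in> {0<..<1} \<Longrightarrow> a 0 0 th * a 1 1 th - a 0 1 th * a 1 0 th \<noteq> 0"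
    and dif: "\<And>i j x. a i j differentiable (at x)"
  shows "generically_nonsingular 2 a u"
  unfolding generically_nonsingular_def
proof (intro allI impI)
  fix J assume J: "finite J" "\<forall>i<2. \<forall>j<2. u i j \<in> J"
  let ?H = "\<lambda>j. {y \<in> space (PiM J (\<lambda>_. lborel :: complex measure)). y j = 0}"
  have "singular_set J 2 a u \<subseteq> ?H (u 0 0) \<union> ?H (u 1 1)"
  proof
    fix y assume "y \<in> singular_set J 2 a u"
    then obtain th where y: "y \<in> space (PiM J (\<lambda>_. lborel))" and th: "th \<in> {0<..<1}"
        and "Determinant.det (sample_mat 2 a u y th) = 0"
      unfolding singular_set_def by auto
    then have "y (u 0 0) * y (u 1 1) * (a 0 0 th * a 1 1 th - a 0 1 th * a 1 0 th) = 0"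
      unfolding det_sample_mat_2 u by (simp add: algebra_simps)
    with nz[OF th] y show "y \<in> ?H (u 0 0) \<union> ?H (u 1 1)" by auto
  qed
  moreover have "singular_set J 2 a u \<in> sets (PiM J (\<lambda>_. lborel))"
    using J(2) dif by (intro singular_set_sets) auto
  moreover have "?H (u 0 0) \<union> ?H (u 1 1) \<in> null_sets (PiM J (\<lambda>_. lborel))"
    using J by (intro null_sets.Un coordinate_zero_null) auto
  ultimately show "singular_set J 2 a u \<in> null_sets (PiM J (\<lambda>_. lborel))"
    using null_sets_subset by blast
qed

section \<open>Ordering the preamble equations\<close>

lemma fresh_diagonal_shifted:
  fixes r sh :: "nat \<Rightarrow> int" and c :: "nat \<Rightarrow> 'c"
  assumes "(\<forall>i<n. r i < r n) \<and> (\<forall>j<n. c j = c n \<longrightarrow> sh j < sh n)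
         \<or> (\<forall>i<n. r n < r i) \<and> (\<forall>j<n. c j = c n \<longrightarrow> sh n < sh j)"
  shows "fresh_diagonal n (\<lambda>i j. (c j, r i + sh j))"
  unfolding fresh_diagonal_def
proof (intro allI impI)
  fix i j assume ij: "i \<le> n" "j \<le> n" "(i, j) \<noteq> (n, n)"
  show "(c j, r i + sh j) \<noteq> (c n, r n + sh n)"
  proof (cases "j = n")
    case True
    with ij have "i < n" by auto
    with True assms show ?thesis by auto
  next
    case False
    with ij have "j < n" by auto
    consider "i = n" | "i < n" using ij(1) by linarith
    then show ?thesis using assms \<open>j < n\<close> by cases force+
  qed
qed

(* Layout of the system matrix of size KL+L+1. Row p is the preamble equation at time row_time p.
   Column 1 carries the term e(theta t) e(df t) s(t); column 0 and columns 2..L carry the signal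
   taps s(t + l - tau), column 0 being l = tau, which shares the sample s(t) with column 1; the
   columns above L carry the jammer taps i_k(t + l). Row times increase while the taps l > tau are added and
   decrease afterwards, which makes every diagonal entry beyond the 2x2 corner fresh. *)
definition row_time :: "nat \<Rightarrow> nat \<Rightarrow> nat \<Rightarrow> nat \<Rightarrow> int" where
  "row_time K L tau p = (if p \<le> L - tau then int (K*L + tau + p) + 1 else int (K*L + L) + 1 - int p)"

definition col_source :: "nat \<Rightarrow> nat \<Rightarrow> nat \<Rightarrow> nat" where
  "col_source K L q = (if q \<le> L then 0 else (K*L + L - q) div L + 1)"

definition signal_tap :: "nat \<Rightarrow> nat \<Rightarrow> nat \<Rightarrow> nat" where
  "signal_tap L tau q = (if q = 0 then tau else if q \<le> L - tau then q - 1 + tau else L - q)"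

definition col_tap :: "nat \<Rightarrow> nat \<Rightarrow> nat \<Rightarrow> nat \<Rightarrow> nat" where
  "col_tap K L tau q = (if q \<le> L then signal_tap L tau q else (K*L + L - q) mod L)"

definition col_shift :: "nat \<Rightarrow> nat \<Rightarrow> nat \<Rightarrow> nat \<Rightarrow> int" where
  "col_shift K L tau q = int (col_tap K L tau q) - (if q \<le> L then int tau else 0)"

definition sample_index :: "nat \<Rightarrow> nat \<Rightarrow> nat \<Rightarrow> nat \<Rightarrow> nat \<Rightarrow> nat \<times> int" where
  "sample_index K L tau p q = (col_source K L q, row_time K L tau p + col_shift K L tau q)"

lemma mod_less_mod_of_div_eq:
  fixes a b L :: nat
  assumes "a div L = b div L" "a < b"
  shows "a mod L < b mod L"
  using assms by (metis add_less_cancel_left div_mult_mod_eq mult.commute)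

lemma sample_index_monotone:
  assumes tau: "tau < L" and n: "2 \<le> n" "n \<le> K*L + L"
  shows "(\<forall>i<n. row_time K L tau i < row_time K L tau n)
           \<and> (\<forall>j<n. col_source K L j = col_source K L n \<longrightarrow> col_shift K L tau j < col_shift K L tau n)
       \<or> (\<forall>i<n. row_time K L tau n < row_time K L tau i)
           \<and> (\<forall>j<n. col_source K L j = col_source K L n \<longrightarrow> col_shift K L tau n < col_shift K L tau j)"
proof (cases "n \<le> L")
  case True
  then show ?thesis
    using n tau by (cases "n \<le> L - tau") (auto simp: row_time_def col_shift_def col_tap_def signal_tap_def)
next
  case nL: False
  have "col_shift K L tau n < col_shift K L tau j"
    if j: "j < n" and same: "col_source K L j = col_source K L n" for j
  proof -
    have jL: "\<not> j \<le> L"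
      using same nL by (auto simp: col_source_def split: if_splits)
    with same nL have "(K*L + L - n) div L = (K*L + L - j) div L"
      by (simp add: col_source_def)
    moreover have "K*L + L - n < K*L + L - j" using j n by simp
    ultimately have "(K*L + L - n) mod L < (K*L + L - j) mod L"
      by (rule mod_less_mod_of_div_eq)
    then show ?thesis using jL nL by (simp add: col_shift_def col_tap_def signal_tap_def)
  qed
  moreover have "\<forall>i<n. row_time K L tau n < row_time K L tau i"
    using nL n tau by (auto simp: row_time_def)
  ultimately show ?thesis by blast
qed

lemma fresh_diagonal_sample_index:
  assumes "tau < L" "2 \<le> n" "n \<le> K*L + L"
  shows "fresh_diagonal n (sample_index K L tau)"
  using fresh_diagonal_shifted[OF sample_index_monotone[OF assms]]
  by (simp add: sample_index_def[abs_def])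

lemma row_time_bounds:
  assumes "tau < L" "p \<le> K*L + L"
  shows "1 \<le> row_time K L tau p" "row_time K L tau p \<le> int (K*L + L) + 1"
proof -
  have "int p \<le> int K * int L + int L"
    using assms(2) by (metis of_nat_add of_nat_le_iff of_nat_mult)
  then show "1 \<le> row_time K L tau p" "row_time K L tau p \<le> int (K*L + L) + 1"
    using assms by (auto simp: row_time_def)
qed

lemma col_source_le:
  assumes "q \<le> K*L + L"
  shows "col_source K L q \<le> K"
proof (cases "q \<le> L")
  case False
  then have "K*L + L - q < K*L" using assms by linarith
  then have "(K*L + L - q) div L < K" by (intro less_mult_imp_div_less) simp
  then show ?thesis using False by (simp add: col_source_def)
qed (simp add: col_source_def)

definition signal_col :: "nat \<Rightarrow> nat \<Rightarrow> nat \<Rightarrow> nat" where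
  "signal_col L tau l = (if l = tau then 0 else if l < tau then L - l else l + 1 - tau)"

definition jammer_col :: "nat \<Rightarrow> nat \<Rightarrow> nat \<Rightarrow> nat \<Rightarrow> nat" where
  "jammer_col K L k l = K*L + L - ((k - 1)*L + l)"

lemma signal_col:
  assumes "tau < L" "l < L"
  shows "signal_col L tau l \<le> L" "signal_col L tau l \<noteq> 1"
    "col_source K L (signal_col L tau l) = 0" "col_tap K L tau (signal_col L tau l) = l"
  using assms by (auto simp: signal_col_def col_source_def col_tap_def signal_tap_def)

lemma jammer_col:
  assumes "1 \<le> k" "k \<le> K" "l < L"
  shows "L < jammer_col K L k l" "jammer_col K L k l \<le> K*L + L"
    "col_source K L (jammer_col K L k l) = k" "col_tap K L tau (jammer_col K L k l) = l"
proof -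
  have "(k - 1)*L + l < (k - 1)*L + L" using assms(3) by simp
  also have "\<dots> = k*L" using assms(1) by (cases k) auto
  also have "\<dots> \<le> K*L" using assms(2) by simp
  finally have lt: "(k - 1)*L + l < K*L" .
  then show "L < jammer_col K L k l" "jammer_col K L k l \<le> K*L + L"
    by (simp_all add: jammer_col_def)
  have "K*L + L - jammer_col K L k l = (k - 1)*L + l"
    using lt by (simp add: jammer_col_def)
  then show "col_source K L (jammer_col K L k l) = k" "col_tap K L tau (jammer_col K L k l) = l"
    using \<open>L < jammer_col K L k l\<close> assms by (simp_all add: col_source_def col_tap_def)
qed

lemma bij_betw_signal_col:
  assumes "tau < L"
  shows "bij_betw (signal_col L tau) {..<L} ({0} \<union> {2..L})"
  using assms
  by (intro bij_betw_byWitness[where f' = "signal_tap L tau"]) (auto simp: signal_col_def signal_tap_def)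

lemma bij_betw_jammer_col:
  "bij_betw (\<lambda>(k, l). jammer_col K L k l) ({1..K} \<times> {..<L}) {L+1..K*L+L}"
proof (rule bij_betw_byWitness[where f' = "\<lambda>q. ((K*L + L - q) div L + 1, (K*L + L - q) mod L)"])
  show "\<forall>a\<in>{1..K} \<times> {..<L}.
      (\<lambda>q. ((K*L + L - q) div L + 1, (K*L + L - q) mod L)) ((\<lambda>(k, l). jammer_col K L k l) a) = a"
    using jammer_col(1,3,4) by (fastforce simp: col_source_def col_tap_def)
  show "(\<lambda>(k, l). jammer_col K L k l) ` ({1..K} \<times> {..<L}) \<subseteq> {L+1..K*L+L}"
    using jammer_col(1,2) by fastforce
  show "\<forall>q\<in>{L+1..K*L+L}. (\<lambda>(k, l). jammer_col K L k l) ((K*L + L - q) div L + 1, (K*L + L - q) mod L) = q"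
  proof
    fix q assume q: "q \<in> {L+1..K*L+L}"
    have "(K*L + L - q) div L * L + (K*L + L - q) mod L = K*L + L - q" by simp
    then show "(\<lambda>(k, l). jammer_col K L k l) ((K*L + L - q) div L + 1, (K*L + L - q) mod L) = q"
      using q by (simp add: jammer_col_def)
  qed
  show "(\<lambda>q. ((K*L + L - q) div L + 1, (K*L + L - q) mod L)) ` {L+1..K*L+L} \<subseteq> {1..K} \<times> {..<L}"
  proof (rule image_subsetI)
    fix q assume q: "q \<in> {L+1..K*L+L}"
    then have "(K*L + L - q) div L + 1 \<le> K"
      using col_source_le[of q K L] by (simp add: col_source_def)
    moreover have "0 < L" using q by (cases "L = 0") auto
    ultimately show "((K*L + L - q) div L + 1, (K*L + L - q) mod L) \<in> {1..K} \<times> {..<L}"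
      by simp
  qed
qed

lemma sum_columns:
  fixes F :: "nat \<Rightarrow> 'a::comm_monoid_add"
  assumes "tau < L"
  shows "(\<Sum>q<Suc (K*L + L). F q)
       = F 1 + (\<Sum>l<L. F (signal_col L tau l)) + (\<Sum>k\<in>{1..K}. \<Sum>l<L. F (jammer_col K L k l))"
proof -
  have "{..<Suc (K*L + L)} = {1} \<union> (({0} \<union> {2..L}) \<union> {L+1..K*L+L})"
    using assms by auto
  moreover have "sum F ({1} \<union> (({0} \<union> {2..L}) \<union> {L+1..K*L+L}))
      = F 1 + sum F (({0} \<union> {2..L}) \<union> {L+1..K*L+L})"
    by (subst sum.union_disjoint) auto
  moreover have "sum F (({0} \<union> {2..L}) \<union> {L+1..K*L+L}) = sum F ({0} \<union> {2..L}) + sum F {L+1..K*L+L}"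
    by (rule sum.union_disjoint) auto
  ultimately have "(\<Sum>q<Suc (K*L + L). F q)
      = F 1 + ((\<Sum>q\<in>{0} \<union> {2..L}. F q) + (\<Sum>q\<in>{L+1..K*L+L}. F q))"
    by simp
  also have "(\<Sum>q\<in>{0} \<union> {2..L}. F q) = (\<Sum>l<L. F (signal_col L tau l))"
    using sum.reindex_bij_betw[OF bij_betw_signal_col[OF assms], of F] by simp
  also have "(\<Sum>q\<in>{L+1..K*L+L}. F q) = (\<Sum>(k, l)\<in>{1..K} \<times> {..<L}. F (jammer_col K L k l))"
    using sum.reindex_bij_betw[OF bij_betw_jammer_col, of F] by (simp add: case_prod_beta')
  also have "\<dots> = (\<Sum>k\<in>{1..K}. \<Sum>l<L. F (jammer_col K L k l))"
    by (rule sum.cartesian_product[symmetric])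
  finally show ?thesis by (simp add: add.assoc)
qed

section \<open>The preamble system\<close>

definition phase :: "real \<Rightarrow> complex" where
  "phase r = exp (\<i> * complex_of_real (2 * pi * r))"

lemma phase_add: "phase (a + b) = phase a * phase b"
  unfolding phase_def by (simp add: distrib_left exp_add[symmetric])

lemma phase_mult_eq: "a + b = c \<Longrightarrow> phase a * phase b = phase c"
  by (metis phase_add)

lemma phase_nonzero [simp]: "phase a \<noteq> 0"
  unfolding phase_def by simp

lemma phase_0 [simp]: "phase 0 = 1"
  unfolding phase_def by simp

lemma phase_int: "a \<in> \<int> \<Longrightarrow> phase a = 1"
  unfolding phase_def using exp_integer_2pi[of a] by (simp add: mult.commute mult.left_commute)

lemma phase_ne_1: "0 < a \<Longrightarrow> a < 1 \<Longrightarrow> phase a \<noteq> 1"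
  unfolding phase_def using exp_i_ne_1[of "2 * pi * a"] by simp

lemma phase_frac: "phase (frac a * of_int t) = phase (a * of_int t)"
proof -
  have "a * of_int t = frac a * of_int t + of_int (\<lfloor>a\<rfloor> * t)"
    by (simp add: frac_def algebra_simps)
  then show ?thesis by (simp add: phase_add phase_int)
qed

lemma exp_eq_phase_neg: "exp (- \<i> * complex_of_real (2 * pi * om * x)) = phase (- (om * x))"
  unfolding phase_def by (simp add: algebra_simps)

lemma phase_linear_differentiable: "(\<lambda>th. phase (th * c)) differentiable (at x)"
proof -
  have "(\<lambda>th. phase (th * c)) = exp \<circ> (\<lambda>th. th *\<^sub>R (\<i> * complex_of_real (2 * pi * c)))"
    by (auto simp: phase_def fun_eq_iff scaleR_conv_of_real algebra_simps)
  then show ?thesis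
    by (simp only: differentiable_chain_at bounded_linear_imp_differentiable bounded_linear_scaleR_left
        field_differentiable_imp_differentiable field_differentiable_within_exp)
qed

definition entry_phase :: "nat \<Rightarrow> nat \<Rightarrow> nat \<Rightarrow> real \<Rightarrow> nat \<Rightarrow> nat \<Rightarrow> real \<Rightarrow> complex" where
  "entry_phase K L tau df p q th =
     (if q = 1 then phase (th * row_time K L tau p) else 1) *
     (if col_source K L q = 0 then phase (df * row_time K L tau p) else 1)"

definition sample :: "(int \<Rightarrow> complex) \<Rightarrow> (nat \<Rightarrow> int \<Rightarrow> complex) \<Rightarrow> nat \<times> int \<Rightarrow> complex" where
  "sample s i kt = (if fst kt = 0 then s (snd kt) else i (fst kt) (snd kt))"

abbreviation system_mat
    :: "nat \<Rightarrow> nat \<Rightarrow> nat \<Rightarrow> real \<Rightarrow> (nat \<times> int \<Rightarrow> complex) \<Rightarrow> real \<Rightarrow> complex mat" where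
  "system_mat K L tau df y th \<equiv>
     sample_mat (Suc (K*L + L)) (entry_phase K L tau df) (sample_index K L tau) y th"

lemma entry_phase_differentiable: "entry_phase K L tau df p q differentiable (at x)"
  unfolding entry_phase_def
  by (cases "q = 1") (auto intro!: differentiable_mult phase_linear_differentiable)

lemma entry_phase_nonzero: "entry_phase K L tau df p q th \<noteq> 0"
  unfolding entry_phase_def by simp

lemma generically_nonsingular_system_mat:
  assumes tau: "tau < L"
  shows "generically_nonsingular (Suc (K*L + L)) (entry_phase K L tau df) (sample_index K L tau)"
proof (rule generically_nonsingular_extend)
  have src: "col_source K L 0 = 0" "col_source K L 1 = 0"
    and shift: "col_shift K L tau 0 = 0" "col_shift K L tau 1 = 0"
    using tau by (auto simp: col_source_def col_shift_def col_tap_def signal_tap_def)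
  have row1: "row_time K L tau 1 = row_time K L tau 0 + 1"
    using tau by (auto simp: row_time_def)
  show "generically_nonsingular 2 (entry_phase K L tau df) (sample_index K L tau)"
  proof (rule generically_nonsingular_2)
    show "sample_index K L tau 0 1 = sample_index K L tau 0 0" "sample_index K L tau 1 0 = sample_index K L tau 1 1"
      using src shift by (simp_all add: sample_index_def)
    fix th :: real assume th: "th \<in> {0<..<1}"
    let ?r = "real_of_int (row_time K L tau 0)"
    have "entry_phase K L tau df 0 0 th * entry_phase K L tau df 1 1 th
        - entry_phase K L tau df 0 1 th * entry_phase K L tau df 1 0 th
        = phase (df * ?r) * phase (df * (?r + 1)) * phase (th * ?r) * (phase th - 1)"
      unfolding entry_phase_def src row1 by (simp add: algebra_simps phase_add)
    also have "\<dots> \<noteq> 0" using phase_ne_1 th by auto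
    finally show "entry_phase K L tau df 0 0 th * entry_phase K L tau df 1 1 th
        - entry_phase K L tau df 0 1 th * entry_phase K L tau df 1 0 th \<noteq> 0" .
  qed (rule entry_phase_differentiable)
  show "2 \<le> Suc (K*L + L)" using tau by simp
qed (use tau fresh_diagonal_sample_index entry_phase_nonzero entry_phase_differentiable in auto)

lemma system_row_expansion:
  fixes K L tau p :: nat
  assumes tau: "tau < L"
  defines "t \<equiv> row_time K L tau p"
  shows "(\<Sum>q<Suc (K*L + L). entry_phase K L tau df p q th * sample s i (sample_index K L tau p q) * X q) =
     phase (th * t) * phase (df * t) * s t * X 1
     + (\<Sum>l<L. phase (df * t) * s (t + int l - int tau) * X (signal_col L tau l))
     + (\<Sum>k\<in>{1..K}. \<Sum>l<L. i k (t + int l) * X (jammer_col K L k l))"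
proof -
  let ?F = "\<lambda>q. entry_phase K L tau df p q th * sample s i (sample_index K L tau p q) * X q"
  have "?F 1 = phase (th * t) * phase (df * t) * s t * X 1"
    using tau by (auto simp: t_def entry_phase_def sample_def sample_index_def col_source_def
        col_shift_def col_tap_def signal_tap_def)
  moreover have "(\<Sum>l<L. ?F (signal_col L tau l))
      = (\<Sum>l<L. phase (df * t) * s (t + int l - int tau) * X (signal_col L tau l))"
    using signal_col(1,2)[OF tau] signal_col(3,4)[OF tau, where K = K]
    by (intro sum.cong) (simp_all add: t_def entry_phase_def sample_def sample_index_def
        col_shift_def add_diff_eq)
  moreover have "?F (jammer_col K L k l) = i k (t + int l) * X (jammer_col K L k l)"
    if "k \<in> {1..K}" "l < L" for k l
  proof -
    have k: "1 \<le> k" "k \<le> K" using that(1) by auto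
    have "jammer_col K L k l \<noteq> 1" "\<not> jammer_col K L k l \<le> L"
      using jammer_col(1)[OF k that(2)] that(2) by auto
    then show ?thesis
      using jammer_col(3)[OF k that(2)] jammer_col(4)[OF k that(2), of tau] k
      by (simp add: t_def entry_phase_def sample_def sample_index_def col_shift_def)
  qed
  then have "(\<Sum>k\<in>{1..K}. \<Sum>l<L. ?F (jammer_col K L k l))
      = (\<Sum>k\<in>{1..K}. \<Sum>l<L. i k (t + int l) * X (jammer_col K L k l))"
    by (intro sum.cong refl) simp_all
  ultimately show ?thesis
    unfolding sum_columns[OF tau, of ?F K] by simp
qed

lemma sample_mat_kernel_trivial:
  assumes "Determinant.det (sample_mat n a u y th) \<noteq> 0"
    and "\<And>p. p < n \<Longrightarrow> (\<Sum>q<n. a p q th * y (u p q) * X q) = 0"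
    and "q < n"
  shows "X q = 0"
proof -
  let ?A = "sample_mat n a u y th"
  have "?A *\<^sub>v vec n X = 0\<^sub>v n"
  proof (rule eq_vecI)
    fix p assume "p < dim_vec (0\<^sub>v n :: complex Matrix.vec)"
    then have p: "p < n" by simp
    have "(?A *\<^sub>v vec n X) $ p = (\<Sum>q<n. a p q th * y (u p q) * X q)"
      using p by (auto simp: scalar_prod_def lessThan_atLeast0 intro: sum.cong)
    then show "(?A *\<^sub>v vec n X) $ p = 0\<^sub>v n $ p" using assms(2)[OF p] p by simp
  qed simp
  then have "vec n X = 0\<^sub>v n"
    using det_0_iff_vec_prod_zero[OF sample_mat_carrier[of n a u y th]] assms(1) vec_carrier by blast
  then show ?thesis
    using assms(3) by (metis index_vec index_zero_vec(1))
qed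

definition column_unknowns :: "nat \<Rightarrow> nat \<Rightarrow> nat \<Rightarrow> complex \<Rightarrow> (nat \<Rightarrow> complex) \<Rightarrow> (nat \<Rightarrow> nat \<Rightarrow> complex)
    \<Rightarrow> nat \<Rightarrow> complex" where
  "column_unknowns K L tau x c d q =
     (if q = 1 then x else if col_source K L q = 0 then c (col_tap K L tau q)
      else d (col_tap K L tau q) (col_source K L q))"

lemma preamble_system_trivial:
  assumes tau: "tau < L" and T: "K*L + L < T"
    and nonsingular: "Determinant.det (system_mat K L tau df (sample s i) th) \<noteq> 0"
    and eq: "\<And>t. t \<in> {1..int T} \<Longrightarrow>
       (\<Sum>l<L. phase (df * t) * s (t + int l - int tau) * c l)
       + (\<Sum>k\<in>{1..K}. \<Sum>l<L. i k (t + int l) * d l k)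
       + phase (th * t) * phase (df * t) * s t * x = 0"
  shows "x = 0 \<and> (\<forall>l<L. c l = 0) \<and> (\<forall>k\<in>{1..K}. \<forall>l<L. d l k = 0)"
proof -
  let ?X = "column_unknowns K L tau x c d"
  have X1: "?X 1 = x"
    by (simp add: column_unknowns_def)
  have Xs: "?X (signal_col L tau l) = c l" if "l < L" for l
    using signal_col[OF tau that] by (simp add: column_unknowns_def)
  have Xj: "?X (jammer_col K L k l) = d l k" if "k \<in> {1..K}" "l < L" for k l
    using jammer_col(1,3)[of k K l L] jammer_col(4)[of k K l L tau] that
    by (auto simp: column_unknowns_def)
  have kernel: "?X q = 0" if "q < Suc (K*L + L)" for q
  proof (rule sample_mat_kernel_trivial[OF nonsingular _ that])
    fix p assume "p < Suc (K*L + L)"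
    then have t: "row_time K L tau p \<in> {1..int T}"
      using row_time_bounds[OF tau, of p K] T by (auto simp flip: of_nat_mult of_nat_add)
    show "(\<Sum>q<Suc (K*L + L). entry_phase K L tau df p q th * sample s i (sample_index K L tau p q) * ?X q) = 0"
      unfolding system_row_expansion[OF tau] X1 using eq[OF t] by (simp add: Xs Xj algebra_simps)
  qed
  have "x = 0"
    using kernel[of 1] X1 tau by simp
  moreover have "c l = 0" if "l < L" for l
    using kernel[of "signal_col L tau l"] Xs[OF that] signal_col(1)[OF tau that] by simp
  moreover have "d l k = 0" if "k \<in> {1..K}" "l < L" for k l
    using kernel[of "jammer_col K L k l"] Xj[OF that] jammer_col(2)[of k K l L] that by simp
  ultimately show ?thesis by blast
qed

section \<open>The Hermitian form and the cost function\<close>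

lemma hinner_add_right: "hinner v (a + b) = hinner v a + hinner v b"
  unfolding hinner_def by (simp add: distrib_left sum.distrib)

lemma hinner_scale_right: "hinner v (c *s a) = c * hinner v a"
  unfolding hinner_def by (simp add: sum_distrib_left algebra_simps)

lemma hinner_scale_left: "hinner (c *s v) a = cnj c * hinner v a"
  unfolding hinner_def by (simp add: sum_distrib_left algebra_simps)

lemma hinner_sum_right: "hinner v (sum f A) = (\<Sum>x\<in>A. hinner v (f x))"
  unfolding hinner_def
  by (induction A rule: infinite_finite_induct) (simp_all add: sum_component distrib_left sum.distrib)

lemma hinner_commute: "hinner v w = cnj (hinner w v)"
  unfolding hinner_def by (simp add: mult.commute)

lemma inner_eq_Re_hinner: "inner a b = Re (hinner a b)"
  unfolding inner_vec_def hinner_def by (simp add: inner_complex_def Re_sum)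

lemma hinner_rx:
  "hinner v (rx s i h g K tau df m) =
     phase (df * m) * s (m - int tau) * hinner v h + (\<Sum>k\<in>{1..K}. i k m * hinner v (g k))"
  unfolding rx_def hinner_add_right hinner_scale_right hinner_sum_right
  by (simp add: phase_def mult.assoc)

lemma span_real_complex_combinations:
  fixes g :: "nat \<Rightarrow> complex ^ 'n"
  assumes "x \<in> span (g ` {1..K} \<union> (\<lambda>k. \<i> *s g k) ` {1..K})"
  shows "\<exists>c. x = (\<Sum>k\<in>{1..K}. c k *s g k)"
proof -
  let ?P = "\<lambda>x. \<exists>c. x = (\<Sum>k\<in>{1..K}. c k *s g k)"
  have "subspace (Collect ?P)"
    unfolding subspace_def
  proof (intro conjI ballI allI)
    show "0 \<in> Collect ?P" by (auto intro!: exI[of _ "\<lambda>_. 0"])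
    fix x y assume "x \<in> Collect ?P" "y \<in> Collect ?P"
    then obtain c1 c2 where "x = (\<Sum>k\<in>{1..K}. c1 k *s g k)" "y = (\<Sum>k\<in>{1..K}. c2 k *s g k)" by auto
    then have "x + y = (\<Sum>k\<in>{1..K}. (c1 k + c2 k) *s g k)"
      by (simp add: sum.distrib vector_sadd_rdistrib)
    then show "x + y \<in> Collect ?P" by (intro CollectI exI[of _ "\<lambda>k. c1 k + c2 k"])
  next
    fix r :: real and x assume "x \<in> Collect ?P"
    then obtain c where "x = (\<Sum>k\<in>{1..K}. c k *s g k)" by auto
    then have "r *\<^sub>R x = (\<Sum>k\<in>{1..K}. r *\<^sub>R (c k *s g k))"
      by (simp only: scaleR_sum_right)
    also have "\<dots> = (\<Sum>k\<in>{1..K}. (complex_of_real r * c k) *s g k)"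
      using scaleR_conv_of_real[where 'a = complex]
      by (intro sum.cong refl) (simp add: Finite_Cartesian_Product.vec_eq_iff mult.assoc)
    finally have "r *\<^sub>R x = (\<Sum>k\<in>{1..K}. (complex_of_real r * c k) *s g k)" .
    then show "r *\<^sub>R x \<in> Collect ?P" by (intro CollectI exI[of _ "\<lambda>k. complex_of_real r * c k"])
  qed
  moreover have one: "?P (a *s g k)" if "k \<in> {1..K}" for k a
  proof -
    have "a *s g k = (\<Sum>k'\<in>{1..K}. (if k' = k then a else 0) *s g k')"
      using that by (simp add: if_distrib[of "\<lambda>c. c *s g _"] sum.delta' cong: if_cong)
    then show ?thesis by (intro exI[of _ "\<lambda>k'. if k' = k then a else 0"])
  qed
  then have "?P v" if "v \<in> g ` {1..K} \<union> (\<lambda>k. \<i> *s g k) ` {1..K}" for v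
    using that one[of _ 1] one[of _ "\<i>"] by auto
  ultimately show ?thesis using span_induct[OF assms] by blast
qed

lemma cindep_family_not_in_span:
  fixes h :: "complex ^ 'n" and g :: "nat \<Rightarrow> complex ^ 'n"
  assumes ind: "cindep_family (\<lambda>k. if k = 0 then h else g k) K"
  shows "h \<notin> span (g ` {1..K} \<union> (\<lambda>k. \<i> *s g k) ` {1..K})"
proof
  assume "h \<in> span (g ` {1..K} \<union> (\<lambda>k. \<i> *s g k) ` {1..K})"
  then obtain c where c: "h = (\<Sum>k\<in>{1..K}. c k *s g k)"
    using span_real_complex_combinations by blast
  let ?c = "\<lambda>k. if k = 0 then 1 else - c k"
  have "{0..K} = insert 0 {1..K}" by auto
  then have "(\<Sum>k\<in>{0..K}. ?c k *s (if k = 0 then h else g k)) = h + (\<Sum>k\<in>{1..K}. (- c k) *s g k)"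
    by simp
  also have "\<dots> = h - (\<Sum>k\<in>{1..K}. c k *s g k)"
    by (simp add: sum_negf vec_eq_iff)
  also have "\<dots> = 0" by (simp add: c)
  finally have "?c 0 = 0"
    by (rule ind[unfolded cindep_family_def, rule_format]) simp
  then show False by simp
qed

lemma cindep_family_dual_vector:
  fixes h :: "complex ^ 'n" and g :: "nat \<Rightarrow> complex ^ 'n"
  assumes "cindep_family (\<lambda>k. if k = 0 then h else g k) K"
  shows "\<exists>v. hinner h v = 1 \<and> (\<forall>k\<in>{1..K}. hinner (g k) v = 0)"
proof -
  (* Real orthogonality to both g k and i g k is complex orthogonality to g k. *)
  let ?G = "g ` {1..K} \<union> (\<lambda>k. \<i> *s g k) ` {1..K}"
  obtain y z where y: "y \<in> span ?G" and orth: "\<And>w. w \<in> span ?G \<Longrightarrow> real_inner_class.orthogonal z w"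
    and hyz: "h = y + z"
    using orthogonal_subspace_decomp_exists[of ?G h] by blast
  have gz: "hinner (g k) z = 0" if "k \<in> {1..K}" for k
  proof -
    have "g k \<in> span ?G" "\<i> *s g k \<in> span ?G" using that by (auto intro: span_base)
    then have "inner z (g k) = 0" "inner z (\<i> *s g k) = 0"
      using orth unfolding real_inner_class.orthogonal_def by auto
    then have "Re (hinner (g k) z) = 0" "Re (hinner (\<i> *s g k) z) = 0"
      by (simp_all add: inner_eq_Re_hinner[symmetric] inner_commute)
    then show ?thesis by (simp add: hinner_scale_left complex_eq_iff)
  qed
  have "z \<noteq> 0"
    using cindep_family_not_in_span[OF assms] y hyz by auto
  moreover have "Re (hinner h z) = inner z z"
    using orth[OF y] inner_commute[of y z]
    by (simp add: hyz inner_eq_Re_hinner[symmetric] inner_add_left real_inner_class.orthogonal_def)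
  ultimately have hz: "hinner h z \<noteq> 0" by auto
  show ?thesis
    using hz gz by (intro exI[of _ "(1 / hinner h z) *s z"]) (simp add: hinner_scale_right)
qed

lemma costF_nonneg: "0 \<le> costF s y L T om w"
  unfolding costF_def by (intro sum_nonneg) simp

lemma costF_eq_0D:
  assumes "costF s y L T om w = 0" "t \<in> {1..int T}"
  shows "s t = (\<Sum>l<L. exp (- \<i> * complex_of_real (2 * pi * om * of_int (t + int l))) * hinner (w l) (y (t + int l)))"
  using assms unfolding costF_def by (subst (asm) sum_nonneg_eq_0_iff) auto

lemma demodulated_tap:
  "phase (om * t) * (exp (- \<i> * complex_of_real (2 * pi * om * of_int (t + int l)))
      * hinner v (rx s i h g K tau df (t + int l)))
   = phase (df * t) * s (t + int l - int tau) * (phase ((df - om) * l) * hinner v h)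
     + (\<Sum>k\<in>{1..K}. i k (t + int l) * (phase (- (om * l)) * hinner v (g k)))"
proof -
  have E: "phase (om * t) * exp (- \<i> * complex_of_real (2 * pi * om * of_int (t + int l)))
      = phase (- (om * l))"
    unfolding exp_eq_phase_neg by (rule phase_mult_eq) (simp add: algebra_simps)
  have "phase (- (om * l)) * phase (df * of_int (t + int l)) = phase (df * t + (df - om) * l)"
    by (rule phase_mult_eq) (simp add: algebra_simps)
  then have D: "phase (- (om * l)) * phase (df * of_int (t + int l)) = phase (df * t) * phase ((df - om) * l)"
    by (simp only: phase_add)
  have "phase (om * t) * (exp (- \<i> * complex_of_real (2 * pi * om * of_int (t + int l)))
      * hinner v (rx s i h g K tau df (t + int l)))
    = phase (- (om * l)) * (phase (df * of_int (t + int l)) * s (t + int l - int tau) * hinner v h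
      + (\<Sum>k\<in>{1..K}. i k (t + int l) * hinner v (g k)))"
    unfolding hinner_rx mult.assoc[symmetric] E ..
  also have "\<dots> = (phase (- (om * l)) * phase (df * of_int (t + int l))) * s (t + int l - int tau) * hinner v h
      + (\<Sum>k\<in>{1..K}. i k (t + int l) * (phase (- (om * l)) * hinner v (g k)))"
    by (simp add: distrib_left sum_distrib_left algebra_simps)
  finally show ?thesis
    unfolding D by (simp add: algebra_simps)
qed

lemma zero_cost_linear_relation:
  assumes "costF s (rx s i h g K tau df) L T om w = 0" "t \<in> {1..int T}"
  shows "(\<Sum>l<L. phase (df * t) * s (t + int l - int tau) * (phase ((df - om) * l) * hinner (w l) h))
       + (\<Sum>k\<in>{1..K}. \<Sum>l<L. i k (t + int l) * (phase (- (om * l)) * hinner (w l) (g k)))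
       + phase ((om - df) * t) * phase (df * t) * s t * (-1) = 0"
proof -
  have "phase (om * t) * s t
      = (\<Sum>l<L. phase (om * t) * (exp (- \<i> * complex_of_real (2 * pi * om * of_int (t + int l)))
          * hinner (w l) (rx s i h g K tau df (t + int l))))"
    by (subst costF_eq_0D[OF assms]) (simp only: sum_distrib_left)
  also have "\<dots> = (\<Sum>l<L. phase (df * t) * s (t + int l - int tau) * (phase ((df - om) * l) * hinner (w l) h))
      + (\<Sum>k\<in>{1..K}. \<Sum>l<L. i k (t + int l) * (phase (- (om * l)) * hinner (w l) (g k)))"
    unfolding demodulated_tap sum.distrib by (simp only: sum.swap[of _ "{1..K}"])
  finally show ?thesis
    using phase_mult_eq[of "(om - df) * t" "df * t" "om * t"] by (simp add: algebra_simps)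
qed

lemma costF_zero_at_dual_filter:
  assumes tau: "tau < L" and v: "hinner h v = 1" "\<forall>k\<in>{1..K}. hinner (g k) v = 0"
  shows "costF s (rx s i h g K tau df) L T df (\<lambda>l. if l = tau then v else 0) = 0"
  unfolding costF_def
proof (intro sum.neutral ballI)
  fix t :: int
  have "hinner v h = 1" "\<forall>k\<in>{1..K}. hinner v (g k) = 0"
    using v hinner_commute[of v] by simp_all
  then have "hinner v (rx s i h g K tau df (t + int tau)) = phase (df * of_int (t + int tau)) * s t"
    unfolding hinner_rx by simp
  moreover have "exp (- \<i> * complex_of_real (2 * pi * df * of_int (t + int tau))) * phase (df * of_int (t + int tau)) = 1"
    unfolding exp_eq_phase_neg by (simp add: phase_mult_eq)
  moreover have "(\<Sum>l<L. exp (- \<i> * complex_of_real (2 * pi * df * of_int (t + int l))) *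
        hinner (if l = tau then v else 0) (rx s i h g K tau df (t + int l)))
      = (\<Sum>l<L. if l = tau then exp (- \<i> * complex_of_real (2 * pi * df * of_int (t + int l))) *
        hinner v (rx s i h g K tau df (t + int l)) else 0)"
    by (intro sum.cong refl) (simp add: hinner_def)
  ultimately have "(\<Sum>l<L. exp (- \<i> * complex_of_real (2 * pi * df * of_int (t + int l))) *
        hinner (if l = tau then v else 0) (rx s i h g K tau df (t + int l))) = s t"
    using tau by (simp add: sum.delta mult.assoc[symmetric])
  then show "(cmod (s t - (\<Sum>l<L. exp (- \<i> * complex_of_real (2 * pi * df * of_int (t + int l))) *
        hinner (if l = tau then v else 0) (rx s i h g K tau df (t + int l)))))\<^sup>2 = 0"
    by simp
qed

lemma zero_cost_offset_eq:
  assumes tau: "tau < L" and T: "K*L + L < T"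
    and nonsingular: "\<forall>th\<in>{0<..<1}. Determinant.det (system_mat K L tau df (sample s i) th) \<noteq> 0"
    and Om: "om \<in> Om" "df \<in> Om" "\<forall>a\<in>Om. \<forall>b\<in>Om. a \<noteq> b \<longrightarrow> a - b \<notin> \<int>"
    and zero: "costF s (rx s i h g K tau df) L T om w = 0"
  shows "om = df"
proof (rule ccontr)
  assume "om \<noteq> df"
  then have "frac (om - df) \<noteq> 0"
    using Om by (simp add: frac_eq_0_iff)
  then have "frac (om - df) \<in> {0<..<1}"
    using frac_ge_0[of "om - df"] frac_lt_1[of "om - df"] by auto
  then have "(-1 :: complex) = 0"
  proof (rule preamble_system_trivial[OF tau T nonsingular[rule_format], THEN conjunct1])
    fix t :: int assume "t \<in> {1..int T}"
    from zero_cost_linear_relation[OF zero this]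
    show "(\<Sum>l<L. phase (df * t) * s (t + int l - int tau) * (phase ((df - om) * l) * hinner (w l) h))
       + (\<Sum>k\<in>{1..K}. \<Sum>l<L. i k (t + int l) * (phase (- (om * l)) * hinner (w l) (g k)))
       + phase (frac (om - df) * t) * phase (df * t) * s t * (-1) = 0"
      by (simp only: phase_frac)
  qed
  then show False by simp
qed

lemma zero_cost_in_goodC:
  assumes tau: "tau < L" and T: "K*L + L < T"
    and nonsingular: "Determinant.det (system_mat K L tau df (sample s i) th) \<noteq> 0"
    and zero: "costF s (rx s i h g K tau df) L T df w = 0"
  shows "w \<in> goodC h g K L tau"
proof -
  let ?c = "\<lambda>l. hinner (w l) h - (if l = tau then 1 else 0)"
  let ?d = "\<lambda>l k. phase (- (df * l)) * hinner (w l) (g k)"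
  have "(0 :: complex) = 0 \<and> (\<forall>l<L. ?c l = 0) \<and> (\<forall>k\<in>{1..K}. \<forall>l<L. ?d l k = 0)"
  proof (rule preamble_system_trivial[OF tau T nonsingular])
    fix t :: int assume "t \<in> {1..int T}"
    let ?F = "\<lambda>l::nat. phase (df * t) * s (t + int l - int tau)"
    have "(\<Sum>l<L. ?F l * ?c l) = (\<Sum>l<L. ?F l * hinner (w l) h - (if l = tau then ?F l else 0))"
      by (intro sum.cong refl) (simp add: right_diff_distrib)
    also have "\<dots> = (\<Sum>l<L. ?F l * hinner (w l) h) - (\<Sum>l<L. if l = tau then ?F l else 0)"
      by (rule sum_subtractf)
    also have "(\<Sum>l<L. if l = tau then ?F l else 0) = phase (df * t) * s t"
      using tau by (simp add: sum.delta)
    finally have split: "(\<Sum>l<L. ?F l * ?c l) = (\<Sum>l<L. ?F l * hinner (w l) h) - phase (df * t) * s t"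
      by simp
    have "(\<Sum>l<L. ?F l * hinner (w l) h) + (\<Sum>k\<in>{1..K}. \<Sum>l<L. i k (t + int l) * ?d l k)
        - phase (df * t) * s t = 0"
      using zero_cost_linear_relation[OF zero \<open>t \<in> {1..int T}\<close>] by (simp add: mult.assoc)
    then show "(\<Sum>l<L. ?F l * ?c l) + (\<Sum>k\<in>{1..K}. \<Sum>l<L. i k (t + int l) * ?d l k)
        + phase (th * t) * phase (df * t) * s t * 0 = 0"
      unfolding split diff_add_eq by simp
  qed
  then show ?thesis
    unfolding goodC_def using tau
    by (auto simp: hinner_commute[of h] hinner_commute[of "g _"] split: if_splits)
qed

section \<open>Identifiability\<close>

lemma identifiable_if_nonsingular:
  assumes tau: "tau < L" and T: "K*L + L < T"
    and ind: "cindep_family (\<lambda>k. if k = 0 then h else g k) K"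
    and Om: "df \<in> Om" "\<forall>a\<in>Om. \<forall>b\<in>Om. a \<noteq> b \<longrightarrow> a - b \<notin> \<int>"
    and nonsingular: "\<forall>th\<in>{0<..<1}. Determinant.det (system_mat K L tau df (sample s i) th) \<noteq> 0"
  shows "(\<exists>om\<in>Om. \<exists>w. costF s (rx s i h g K tau df) L T om w = 0
         \<and> (\<forall>om'\<in>Om. \<forall>w'. costF s (rx s i h g K tau df) L T om w
                            \<le> costF s (rx s i h g K tau df) L T om' w'))
   \<and> (\<forall>om\<in>Om. \<forall>w. costF s (rx s i h g K tau df) L T om w = 0
         \<longrightarrow> om = df \<and> w \<in> goodC h g K L tau)"
proof (intro conjI ballI allI impI)
  obtain v where "hinner h v = 1" "\<forall>k\<in>{1..K}. hinner (g k) v = 0"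
    using cindep_family_dual_vector[OF ind] by blast
  then have "costF s (rx s i h g K tau df) L T df (\<lambda>l. if l = tau then v else 0) = 0"
    by (rule costF_zero_at_dual_filter[OF tau])
  then show "\<exists>om\<in>Om. \<exists>w. costF s (rx s i h g K tau df) L T om w = 0
         \<and> (\<forall>om'\<in>Om. \<forall>w'. costF s (rx s i h g K tau df) L T om w
                            \<le> costF s (rx s i h g K tau df) L T om' w')"
    using Om(1) costF_nonneg by metis
next
  fix om w assume om: "om \<in> Om" and zero: "costF s (rx s i h g K tau df) L T om w = 0"
  show om_eq: "om = df"
    using zero_cost_offset_eq[OF tau T nonsingular om Om zero] .
  have "(1/2 :: real) \<in> {0<..<1}" by simp
  then show "w \<in> goodC h g K L tau"
    by (rule zero_cost_in_goodC[OF tau T nonsingular[rule_format] zero[unfolded om_eq]])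
qed

lemma AE_samples_not_in_null_set:
  assumes jc: "jointly_continuous M X Ks"
    and meas: "\<forall>k t. (\<lambda>x. X x k t) \<in> borel_measurable M"
    and J: "finite J" "J \<subseteq> Ks \<times> UNIV"
    and null: "B \<in> null_sets (PiM J (\<lambda>_. lborel :: complex measure))"
  shows "AE x in M. (\<lambda>j\<in>J. X x (fst j) (snd j)) \<notin> B"
proof -
  let ?D = "distr M (PiM J (\<lambda>_. borel :: complex measure)) (\<lambda>x. \<lambda>j\<in>J. X x (fst j) (snd j))"
  have samples_meas: "(\<lambda>x. \<lambda>j\<in>J. X x (fst j) (snd j)) \<in> measurable M (PiM J (\<lambda>_. borel))"
    using meas by (intro measurable_restrict) auto
  have "absolutely_continuous (PiM J (\<lambda>_. lborel)) ?D"
    using jc J unfolding jointly_continuous_def by blast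
  then have B: "B \<in> null_sets ?D"
    using null unfolding absolutely_continuous_def by blast
  then have B_sets: "B \<in> sets (PiM J (\<lambda>_. borel :: complex measure))"
    by (auto dest: null_setsD2)
  have "emeasure M ((\<lambda>x. \<lambda>j\<in>J. X x (fst j) (snd j)) -` B \<inter> space M) = emeasure ?D B"
    by (rule emeasure_distr[OF samples_meas B_sets, symmetric])
  also have "\<dots> = 0" using B by auto
  finally have "emeasure M ((\<lambda>x. \<lambda>j\<in>J. X x (fst j) (snd j)) -` B \<inter> space M) = 0" .
  then have "(\<lambda>x. \<lambda>j\<in>J. X x (fst j) (snd j)) -` B \<inter> space M \<in> null_sets M"
    using measurable_sets[OF samples_meas B_sets] by (intro null_setsI)
  then show ?thesis
    by (rule AE_I') auto
qed

lemma AE_system_nonsingular: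
  assumes tau: "tau < L"
    and meas: "\<forall>k t. (\<lambda>x. proc S I x k t) \<in> borel_measurable M"
    and jc: "jointly_continuous M (proc S I) {0..K}"
  shows "AE x in M. \<forall>th\<in>{0<..<1}. Determinant.det (system_mat K L tau df (sample (S x) (I x)) th) \<noteq> 0"
proof -
  define n where "n = Suc (K*L + L)"
  define J where "J = (\<lambda>(p, q). sample_index K L tau p q) ` ({..<n} \<times> {..<n})"
  have in_J: "sample_index K L tau p q \<in> J" if "p < n" "q < n" for p q
    using that unfolding J_def by auto
  have "finite J" unfolding J_def by simp
  moreover have "J \<subseteq> {0..K} \<times> UNIV"
    using col_source_le[of _ K L] unfolding J_def n_def by (auto simp: sample_index_def)
  moreover have "singular_set J n (entry_phase K L tau df) (sample_index K L tau)
      \<in> null_sets (PiM J (\<lambda>_. lborel))"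
    using generically_nonsingular_system_mat[OF tau, of K df] \<open>finite J\<close> in_J
    unfolding generically_nonsingular_def n_def by blast
  ultimately have "AE x in M. (\<lambda>j\<in>J. proc S I x (fst j) (snd j))
      \<notin> singular_set J n (entry_phase K L tau df) (sample_index K L tau)"
    by (rule AE_samples_not_in_null_set[OF jc meas])
  then show ?thesis
  proof (rule eventually_mono, intro ballI)
    fix x and th :: real assume x: "(\<lambda>j\<in>J. proc S I x (fst j) (snd j))
        \<notin> singular_set J n (entry_phase K L tau df) (sample_index K L tau)" and th: "th \<in> {0<..<1}"
    have "system_mat K L tau df (\<lambda>j\<in>J. proc S I x (fst j) (snd j)) th
        = system_mat K L tau df (sample (S x) (I x)) th"
      using in_J unfolding n_def by (intro sample_mat_cong) (simp add: proc_def sample_def)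
    moreover have "Determinant.det (system_mat K L tau df (\<lambda>j\<in>J. proc S I x (fst j) (snd j)) th) \<noteq> 0"
      using x th unfolding singular_set_def n_def by (auto simp: space_PiM)
    ultimately show "Determinant.det (system_mat K L tau df (sample (S x) (I x)) th) \<noteq> 0"
      by simp
  qed
qed

theorem theorem1:
  fixes M :: "'w measure"
    and S :: "'w \<Rightarrow> int \<Rightarrow> complex"
    and I :: "'w \<Rightarrow> nat \<Rightarrow> int \<Rightarrow> complex"
    and h :: "complex ^ 'n"
    and g :: "nat \<Rightarrow> complex ^ 'n"
    and K L T tau :: nat
    and df :: real
    and Om :: "real set"
  assumes "prob_space M"
    and "K \<ge> 1" and "L \<ge> 1" and "T \<ge> 1"
    and "CARD('n) \<ge> K + 1"
    and "tau < L"
    and "cindep_family (\<lambda>k. if k = 0 then h else g k) K"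
    and "\<forall>k t. (\<lambda>x. proc S I x k t) \<in> borel_measurable M"
    and "prob_space.indep_vars M (\<lambda>_. PiM UNIV (\<lambda>_. borel :: complex measure))
           (\<lambda>k x. proc S I x k) {0..K}"
    and "jointly_continuous M (proc S I) {0..K}"
    and "df \<in> Om"
    and "\<forall>a\<in>Om. \<forall>b\<in>Om. a \<noteq> b \<longrightarrow> a - b \<notin> \<int>"
    and "T > (K + 1) * L"
  shows "AE x in M.
     (\<exists>om\<in>Om. \<exists>w. costF (S x) (rx (S x) (I x) h g K tau df) L T om w = 0
         \<and> (\<forall>om'\<in>Om. \<forall>w'. costF (S x) (rx (S x) (I x) h g K tau df) L T om w
                            \<le> costF (S x) (rx (S x) (I x) h g K tau df) L T om' w'))
   \<and> (\<forall>om\<in>Om. \<forall>w. costF (S x) (rx (S x) (I x) h g K tau df) L T om w = 0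
         \<longrightarrow> om = df \<and> w \<in> goodC h g K L tau)"
proof -
  have T: "K*L + L < T"
    using assms(13) by (simp add: algebra_simps)
  from AE_system_nonsingular[OF assms(6,8,10)]
  show ?thesis
    by eventually_elim (rule identifiable_if_nonsingular[OF assms(6) T assms(7,11,12)])
qed

end
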